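(* Let $J$ be a lex-segment ideal in $R=k[x_1,x_2,x_3]$ with $\dim_k (R/J)_i=h_i$ for every $i\ge 0$. Then for every $i\ge0$, $$\dim_k\left((J:x_3)/J\right)_{i}=h_{i}-h_{i+1}+(h_{i+1})^{-}.$$
   Context: A lex-segment ideal $J$ is a monomial ideal such that for each degree $t$, $J_t$ is spanned by the $\dim_k J_t$ largest monomials of degree $t$ in the lexicographic order with $x_1>x_2>x_3$. For positive integers $h,i$ write uniquely $h=\binom{m_i}{i}+\binom{m_{i-1}}{i-1}+\cdots+\binom{m_j}{j}$ with $m_i>\cdots>m_j\ge j\ge1$, and set $(h)^-=\binom{m_i-1}{i}+\cdots+\binom{m_j-1}{j}$; $(h_{i+1})^-$ is computed with respect to $i+1$, and $(0)^-=0$. *)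

theory Defs
  imports Main
begin

text \<open>Monomials of k[x1,x2,x3] are represented by their exponent vectors (a1,a2,a3).
A monomial ideal is represented by the set of monomials it contains (which form a
k-basis of it); dimensions over k of graded pieces are cardinalities of monomial sets.\<close>

type_synonym mon = "nat \<times> nat \<times> nat"

definition mdeg :: "mon \<Rightarrow> nat" where
  "mdeg m = (case m of (a, b, c) \<Rightarrow> a + b + c)"

definition mmul :: "mon \<Rightarrow> mon \<Rightarrow> mon" where
  "mmul m n = (case m of (a, b, c) \<Rightarrow> case n of (a', b', c') \<Rightarrow> (a + a', b + b', c + c'))"

definition x3 :: mon where "x3 = (0, 0, 1)"

definition mons_deg :: "nat \<Rightarrow> mon set" where
  "mons_deg t = {m. mdeg m = t}"

definition monomial_ideal :: "mon set \<Rightarrow> bool" where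
  "monomial_ideal J \<longleftrightarrow> (\<forall>m\<in>J. \<forall>n. mmul m n \<in> J)"

definition lex_gt :: "mon \<Rightarrow> mon \<Rightarrow> bool" where
  "lex_gt m n = (case m of (a, b, c) \<Rightarrow> case n of (a', b', c') \<Rightarrow>
      a > a' \<or> (a = a' \<and> b > b') \<or> (a = a' \<and> b = b' \<and> c > c'))"

definition lex_segment_ideal :: "mon set \<Rightarrow> bool" where
  "lex_segment_ideal J \<longleftrightarrow> monomial_ideal J \<and>
     (\<forall>t. J \<inter> mons_deg t =
        {m \<in> mons_deg t. card {n \<in> mons_deg t. lex_gt n m} < card (J \<inter> mons_deg t)})"

text \<open>Macaulay representation of h with respect to i:
  h = C(m_i,i) + C(m_{i-1},i-1) + ... + C(m_j,j), m_i > ... > m_j >= j >= 1.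
  The list ms = [m_i, m_{i-1}, ..., m_j]; entry k carries index i - k.\<close>
definition macaulay_rep :: "nat \<Rightarrow> nat \<Rightarrow> nat list \<Rightarrow> bool" where
  "macaulay_rep i h ms \<longleftrightarrow> ms \<noteq> [] \<and> length ms \<le> i \<and>
     sorted_wrt (>) ms \<and> last ms \<ge> i + 1 - length ms \<and>
     h = (\<Sum>k<length ms. (ms ! k) choose (i - k))"

definition macaulay_minus :: "nat \<Rightarrow> nat \<Rightarrow> nat" where
  "macaulay_minus i h = (if h = 0 then 0 else
     (let ms = (THE ms. macaulay_rep i h ms) in
        \<Sum>k<length ms. (ms ! k - 1) choose (i - k)))"

end

theory Submission
  imports Defs
begin

text \<open>Multiplication by \<open>x3\<close> maps the degree-\<open>i\<close> monomials \<open>m\<close> with \<open>m x3 \<notin> J\<close>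
  bijectively onto the degree-\<open>(i+1)\<close> monomials outside \<open>J\<close> divisible by \<open>x3\<close>, and every
  other degree-\<open>i\<close> monomial outside \<open>J\<close> lies in \<open>J:x3\<close>. So the count is \<open>h i - h (i+1) + q\<close>,
  where \<open>q\<close> counts the monomials \<open>x1^a x2^(d-a)\<close> outside \<open>J\<close>, \<open>d = i+1\<close>.

  As \<open>J\<close> is a lex segment, the monomials of degree \<open>d\<close> outside \<open>J\<close> are the \<open>h d\<close>
  lex-smallest ones, and \<open>x1^a x2^(d-a)\<close> is the lex-largest monomial with \<open>x1\<close>-exponent \<open>a\<close>.
  So it lies outside \<open>J\<close> iff the \<open>\<Sum>k\<le>a. d+1-k\<close> monomials with \<open>x1\<close>-exponent at most \<open>a\<close>
  number at most \<open>h d\<close>. Writing \<open>h d = (\<Sum>k<p. d+1-k) + r\<close> with \<open>r \<le> d-p\<close> gives \<open>q = p\<close>,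
  and this decomposition is the Macaulay representation
  \<open>h d = C(d+1,d) + \<dots> + C(d+2-p,d+1-p) + C(d-p,d-p) + \<dots> + C(d+1-p-r,d+1-p-r)\<close>,
  for which \<open>(h d)\<^sup>- = p\<close>.\<close>

text \<open>\<open>macaulay_rep\<close> without the nonemptiness condition, so that it passes to tails.\<close>

definition macaulay_seq :: "nat \<Rightarrow> nat list \<Rightarrow> bool" where
  "macaulay_seq i ms \<longleftrightarrow>
     length ms \<le> i \<and> sorted_wrt (>) ms \<and> (ms \<noteq> [] \<longrightarrow> i + 1 - length ms \<le> last ms)"

definition macaulay_sum :: "nat \<Rightarrow> nat list \<Rightarrow> nat" where
  "macaulay_sum i ms = (\<Sum>k<length ms. ms ! k choose (i - k))"

lemma macaulay_rep_iff:
  "macaulay_rep i h ms \<longleftrightarrow> ms \<noteq> [] \<and> macaulay_seq i ms \<and> h = macaulay_sum i ms"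
  by (auto simp: macaulay_rep_def macaulay_seq_def macaulay_sum_def)

lemma macaulay_sum_Nil [simp]: "macaulay_sum i [] = 0"
  by (simp add: macaulay_sum_def)

lemma macaulay_sum_Cons [simp]:
  "macaulay_sum i (m # ms) = (m choose i) + macaulay_sum (i - 1) ms"
proof -
  have "(\<Sum>k<length ms. (m # ms) ! Suc k choose (i - Suc k))
          = (\<Sum>k<length ms. ms ! k choose (i - 1 - k))"
    by (rule sum.cong[OF refl]) (metis nth_Cons_Suc diff_Suc_eq_diff_pred)
  then show ?thesis unfolding macaulay_sum_def length_Cons sum.lessThan_Suc_shift by simp
qed

lemma macaulay_seq_Cons:
  assumes "macaulay_seq i (m # ms)"
  shows "1 \<le> i" and "macaulay_seq (i - 1) ms" and "ms \<noteq> [] \<Longrightarrow> hd ms < m"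
  using assms by (auto simp: macaulay_seq_def hd_conv_nth)

lemma macaulay_seq_hd_ge: "macaulay_seq i (m # ms) \<Longrightarrow> i \<le> m"
proof (induction ms arbitrary: i m)
  case Nil
  then show ?case by (simp add: macaulay_seq_def)
next
  case (Cons x xs)
  have "i - 1 \<le> x" using Cons.IH macaulay_seq_Cons(2)[OF Cons.prems] by blast
  moreover have "x < m" and "1 \<le> i" using macaulay_seq_Cons[OF Cons.prems] by auto
  ultimately show ?case by linarith
qed

lemma macaulay_sum_less: "macaulay_seq i (m # ms) \<Longrightarrow> macaulay_sum i (m # ms) < Suc m choose i"
proof (induction ms arbitrary: i m)
  case Nil
  then have "i \<le> m" "1 \<le> i" using macaulay_seq_hd_ge macaulay_seq_Cons(1) by blast+
  then show ?case by (cases i) auto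
next
  case (Cons x xs)
  have "1 \<le> i" and "x < m" using macaulay_seq_Cons[OF Cons.prems] by auto
  have "macaulay_sum (i - 1) (x # xs) < Suc x choose (i - 1)"
    using Cons.IH macaulay_seq_Cons(2)[OF Cons.prems] by blast
  also have "\<dots> \<le> m choose (i - 1)" using \<open>x < m\<close> binomial_right_mono by simp
  finally show ?case using \<open>1 \<le> i\<close> by (cases i) auto
qed

lemma macaulay_sum_inj:
  "macaulay_seq i xs \<Longrightarrow> macaulay_seq i ys \<Longrightarrow> macaulay_sum i xs = macaulay_sum i ys \<Longrightarrow> xs = ys"
proof (induction xs arbitrary: i ys)
  case Nil
  show ?case
  proof (cases ys)
    case (Cons y ys')
    then show ?thesis using Nil macaulay_seq_hd_ge[of i y ys'] by simp
  qed simp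
next
  case (Cons m ms)
  obtain y ys' where ys: "ys = y # ys'"
    using Cons.prems macaulay_seq_hd_ge[OF Cons.prems(1)] by (cases ys) auto
  have "m = y"
  proof (rule ccontr)
    assume "m \<noteq> y"
    then consider "Suc m \<le> y" | "Suc y \<le> m" by linarith
    then show False
    proof cases
      case 1
      then have "Suc m choose i \<le> y choose i" by (rule binomial_right_mono)
      then show False using macaulay_sum_less[OF Cons.prems(1)] Cons.prems(3) ys by simp
    next
      case 2
      then have "Suc y choose i \<le> m choose i" by (rule binomial_right_mono)
      then show False using macaulay_sum_less[of i y ys'] Cons.prems(2,3) ys by simp
    qed
  qed
  moreover have "ms = ys'"
  proof (rule Cons.IH)
    show "macaulay_seq (i - 1) ms" "macaulay_seq (i - 1) ys'"
      using Cons.prems(1,2) ys macaulay_seq_Cons(2) by blast+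
    show "macaulay_sum (i - 1) ms = macaulay_sum (i - 1) ys'"
      using Cons.prems(3) ys \<open>m = y\<close> by simp
  qed
  ultimately show ?case using ys by simp
qed

lemma macaulay_rep_unique: "macaulay_rep i h xs \<Longrightarrow> macaulay_rep i h ys \<Longrightarrow> xs = ys"
  using macaulay_sum_inj by (auto simp: macaulay_rep_iff)

lemma macaulay_minus_eq:
  assumes "macaulay_rep i h ms"
  shows "macaulay_minus i h = (\<Sum>k<length ms. (ms ! k - 1) choose (i - k))"
proof -
  obtain m ms' where ms: "ms = m # ms'" and "macaulay_seq i ms"
    using assms by (cases ms) (auto simp: macaulay_rep_iff)
  then have "0 < m choose i" using macaulay_seq_hd_ge by simp
  then have "h \<noteq> 0" using assms ms by (simp add: macaulay_rep_iff)
  moreover have "(THE ms. macaulay_rep i h ms) = ms"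
    using assms macaulay_rep_unique by blast
  ultimately show ?thesis by (simp add: macaulay_minus_def)
qed

lemma mem_mons_deg [simp]: "(a, b, c) \<in> mons_deg t \<longleftrightarrow> a + b + c = t"
  by (simp add: mons_deg_def mdeg_def)

lemma finite_mons_deg: "finite (mons_deg t)"
proof -
  have "mons_deg t \<subseteq> {0..t} \<times> {0..t} \<times> {0..t}"
    by (clarsimp simp: mons_deg_def mdeg_def split: prod.splits)
  then show ?thesis by (rule finite_subset) auto
qed

lemma card_filter_split:
  "finite A \<Longrightarrow> card A = card {x \<in> A. P x} + card {x \<in> A. \<not> P x}"
  using card_Int_Diff[of A "Collect P"] by (simp add: Int_def set_diff_eq)

definition x1_below_count :: "nat \<Rightarrow> nat \<Rightarrow> nat" where
  "x1_below_count d p = (\<Sum>k<p. Suc d - k)"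

lemma x1_below_count_Suc: "x1_below_count d (Suc p) = x1_below_count d p + (Suc d - p)"
  by (simp add: x1_below_count_def)

lemma x1_below_count_mono: "p \<le> q \<Longrightarrow> x1_below_count d p \<le> x1_below_count d q"
  unfolding x1_below_count_def by (rule sum_mono2) auto

lemma x1_below_count_full: "x1_below_count d (Suc d) = Suc (Suc d) choose d"
proof (induction d)
  case 0
  then show ?case by (simp add: x1_below_count_def)
next
  case (Suc d)
  have "x1_below_count (Suc d) (Suc (Suc d)) = Suc (Suc d) + x1_below_count d (Suc d)"
    unfolding x1_below_count_def sum.lessThan_Suc_shift by simp
  then show ?case using Suc by simp
qed

lemma card_mons_deg_fst_eq:
  assumes "a \<le> d"
  shows "card {n \<in> mons_deg d. fst n = a} = Suc d - a"
proof -
  have "{n \<in> mons_deg d. fst n = a} = (\<lambda>b. (a, b, d - a - b)) ` {..d - a}"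
    using assms by (auto simp: image_iff mons_deg_def mdeg_def split: prod.splits)
  moreover have "inj_on (\<lambda>b. (a, b, d - a - b)) {..d - a}" by (auto simp: inj_on_def)
  ultimately show ?thesis using assms by (simp add: card_image)
qed

lemma card_mons_deg_fst_less:
  "p \<le> Suc d \<Longrightarrow> card {n \<in> mons_deg d. fst n < p} = x1_below_count d p"
proof (induction p)
  case 0
  then show ?case by (simp add: x1_below_count_def)
next
  case (Suc p)
  have "{n \<in> mons_deg d. fst n < Suc p}
          = {n \<in> mons_deg d. fst n < p} \<union> {n \<in> mons_deg d. fst n = p}"
    by auto
  moreover have "card (\<dots>) = card {n \<in> mons_deg d. fst n < p} + card {n \<in> mons_deg d. fst n = p}"
    by (rule card_Un_disjoint) (auto intro: finite_subset[OF _ finite_mons_deg])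
  ultimately show ?case using Suc card_mons_deg_fst_eq[of p d] by (simp add: x1_below_count_Suc)
qed

lemma card_mons_deg: "card (mons_deg d) = x1_below_count d (Suc d)"
proof -
  have "{n \<in> mons_deg d. fst n < Suc d} = mons_deg d"
    by (auto simp: mons_deg_def mdeg_def split: prod.splits)
  then show ?thesis using card_mons_deg_fst_less[of "Suc d" d] by simp
qed

lemma x1_below_count_decomp:
  "h \<le> x1_below_count d (Suc d) \<Longrightarrow> \<exists>p r. p \<le> Suc d \<and> r \<le> d - p \<and> h = x1_below_count d p + r"
proof (induction h)
  case 0
  show ?case by (rule exI[of _ 0], rule exI[of _ 0]) (simp add: x1_below_count_def)
next
  case (Suc h)
  then obtain p r where p: "p \<le> Suc d" "r \<le> d - p" and h: "h = x1_below_count d p + r"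
    by auto
  have "p \<le> d" using p h Suc.prems by (cases "p = Suc d") auto
  show ?case
  proof (cases "p + r < d")
    case True
    then show ?thesis using p h by (intro exI[of _ p] exI[of _ "Suc r"]) auto
  next
    case False
    then have "Suc h = x1_below_count d (Suc p)"
      using p h \<open>p \<le> d\<close> by (simp add: x1_below_count_Suc)
    then show ?thesis using \<open>p \<le> d\<close> by (intro exI[of _ "Suc p"] exI[of _ 0]) auto
  qed
qed

lemma x1_below_count_le_eq_lessThan:
  assumes "p \<le> Suc d" and "r \<le> d - p"
  shows "{a. a \<le> d \<and> x1_below_count d (Suc a) \<le> x1_below_count d p + r} = {..<p}"
proof (intro set_eqI iffI)
  fix a assume "a \<in> {a. a \<le> d \<and> x1_below_count d (Suc a) \<le> x1_below_count d p + r}"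
  then have "a \<le> d" and a: "x1_below_count d (Suc a) \<le> x1_below_count d p + r" by auto
  show "a \<in> {..<p}"
  proof (rule ccontr)
    assume "a \<notin> {..<p}"
    then have "x1_below_count d (Suc p) \<le> x1_below_count d (Suc a)"
      by (intro x1_below_count_mono) simp
    moreover have "p \<le> d" using \<open>a \<le> d\<close> \<open>a \<notin> {..<p}\<close> by simp
    ultimately show False using a assms(2) x1_below_count_Suc[of d p] by linarith
  qed
next
  fix a assume "a \<in> {..<p}"
  then show "a \<in> {a. a \<le> d \<and> x1_below_count d (Suc a) \<le> x1_below_count d p + r}"
    using assms x1_below_count_mono[of "Suc a" p d] by auto
qed

lemma sum_lessThan_add_split:
  fixes p r :: nat
  shows "(\<Sum>k<p + r. g k) = (\<Sum>k<p. g k) + (\<Sum>k\<in>{p..<p + r}. g k)"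
  using sum.atLeastLessThan_concat[where m = 0 and n = p and p = "p + r" and g = g]
  by (simp add: lessThan_atLeast0)

lemma macaulay_minus_x1_below_count:
  assumes "1 \<le> d" and "p \<le> Suc d" and "r \<le> d - p"
  shows "macaulay_minus d (x1_below_count d p + r) = p"
proof -
  consider "p = Suc d" | "p = 0" "r = 0" | "p \<le> d" "0 < p + r"
    using assms(2) by linarith
  then show ?thesis
  proof cases
    case 1
    have "macaulay_rep d (x1_below_count d p + r) [Suc (Suc d)]"
      using 1 assms by (simp add: macaulay_rep_iff macaulay_seq_def x1_below_count_full)
    then show ?thesis using 1 by (simp add: macaulay_minus_eq)
  next
    case 2
    then show ?thesis by (simp add: macaulay_minus_def x1_below_count_def)
  next
    case 3
    define f where "f k = (if k < p then Suc d - k else d - k)" for k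
    define ms where "ms = map f [0..<p + r]"
    have len: "length ms = p + r" and nth: "\<And>k. k < p + r \<Longrightarrow> ms ! k = f k"
      by (simp_all add: ms_def)
    have "p + r \<le> d" using 3 assms(3) by linarith
    have "sorted_wrt (>) ms"
      unfolding sorted_wrt_iff_nth_less len using \<open>p + r \<le> d\<close> by (auto simp: nth f_def)
    moreover have "d + 1 - length ms \<le> last ms"
      using 3 \<open>p + r \<le> d\<close> by (simp add: last_conv_nth len nth ms_def f_def; arith)
    moreover have "macaulay_sum d ms = x1_below_count d p + r"
    proof -
      have "macaulay_sum d ms = (\<Sum>k<p + r. f k choose (d - k))"
        unfolding macaulay_sum_def len by (simp add: nth)
      also have "\<dots> = (\<Sum>k<p. Suc d - k) + (\<Sum>k\<in>{p..<p + r}. 1)"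
        unfolding sum_lessThan_add_split using 3 \<open>p + r \<le> d\<close>
        by (intro arg_cong2[where f = "(+)"] sum.cong) (auto simp: f_def Suc_diff_le)
      finally show ?thesis by (simp add: x1_below_count_def)
    qed
    moreover have "ms \<noteq> []" using 3 len by auto
    ultimately have "macaulay_rep d (x1_below_count d p + r) ms"
      using \<open>p + r \<le> d\<close> by (auto simp: macaulay_rep_iff macaulay_seq_def len)
    then have "macaulay_minus d (x1_below_count d p + r)
                 = (\<Sum>k<p + r. (f k - 1) choose (d - k))"
      by (simp add: macaulay_minus_eq len nth)
    also have "\<dots> = (\<Sum>k<p. 1) + (\<Sum>k\<in>{p..<p + r}. 0)"
      unfolding sum_lessThan_add_split using 3 \<open>p + r \<le> d\<close>
      by (intro arg_cong2[where f = "(+)"] sum.cong) (auto simp: f_def)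
    finally show ?thesis by simp
  qed
qed

lemma lex_segment_not_mem_iff:
  assumes "lex_segment_ideal J" and "m \<in> mons_deg d"
  shows "m \<notin> J \<longleftrightarrow> card {n \<in> mons_deg d. \<not> lex_gt n m} \<le> card (mons_deg d - J)"
proof -
  have "card (mons_deg d) = card (J \<inter> mons_deg d) + card (mons_deg d - J)"
    using card_Int_Diff[OF finite_mons_deg, of d J] by (simp add: Int_commute)
  moreover have "card (mons_deg d)
                   = card {n \<in> mons_deg d. lex_gt n m} + card {n \<in> mons_deg d. \<not> lex_gt n m}"
    by (rule card_filter_split[OF finite_mons_deg])
  moreover have "m \<notin> J \<longleftrightarrow> \<not> card {n \<in> mons_deg d. lex_gt n m} < card (J \<inter> mons_deg d)"
    using assms unfolding lex_segment_ideal_def by blast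
  ultimately show ?thesis by linarith
qed

lemma not_lex_gt_x3_free_iff:
  assumes "n \<in> mons_deg d" and "a \<le> d"
  shows "\<not> lex_gt n (a, d - a, 0) \<longleftrightarrow> fst n < Suc a"
  using assms by (cases n) (auto simp: lex_gt_def)

lemma lex_segment_x3_free_not_mem_iff:
  assumes "lex_segment_ideal J" and "a \<le> d"
  shows "(a, d - a, 0) \<notin> J \<longleftrightarrow> x1_below_count d (Suc a) \<le> card (mons_deg d - J)"
proof -
  have "{n \<in> mons_deg d. \<not> lex_gt n (a, d - a, 0)} = {n \<in> mons_deg d. fst n < Suc a}"
    using not_lex_gt_x3_free_iff[OF _ assms(2)] by blast
  then show ?thesis
    using lex_segment_not_mem_iff[OF assms(1), of "(a, d - a, 0)" d]
      card_mons_deg_fst_less[of "Suc a" d] assms(2)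
    by simp
qed

lemma lex_segment_card_x3_free_standard:
  assumes "lex_segment_ideal J" and "1 \<le> d"
  shows "card {n \<in> mons_deg d - J. snd (snd n) = 0} = macaulay_minus d (card (mons_deg d - J))"
proof -
  have "card (mons_deg d - J) \<le> x1_below_count d (Suc d)"
    using card_mono[OF finite_mons_deg, of "mons_deg d - J" d] card_mons_deg by auto
  then obtain p r where p: "p \<le> Suc d" "r \<le> d - p"
    and h: "card (mons_deg d - J) = x1_below_count d p + r"
    using x1_below_count_decomp by blast
  have "{n \<in> mons_deg d - J. snd (snd n) = 0}
          = (\<lambda>a. (a, d - a, 0)) ` {a. a \<le> d \<and> (a, d - a, 0) \<notin> J}"
    by (auto simp: image_iff mons_deg_def mdeg_def split: prod.splits)
  also have "{a. a \<le> d \<and> (a, d - a, 0) \<notin> J}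
             = {a. a \<le> d \<and> x1_below_count d (Suc a) \<le> card (mons_deg d - J)}"
    using lex_segment_x3_free_not_mem_iff[OF assms(1)] by blast
  also have "\<dots> = {..<p}"
    unfolding h by (rule x1_below_count_le_eq_lessThan[OF p])
  finally have "card {n \<in> mons_deg d - J. snd (snd n) = 0} = p"
    by (simp add: card_image inj_on_def)
  then show ?thesis using macaulay_minus_x1_below_count[OF assms(2) p] h by simp
qed

lemma card_standard_colon_split:
  assumes "monomial_ideal J"
  shows "card (mons_deg i - J)
           = card {m \<in> mons_deg i. mmul m x3 \<in> J \<and> m \<notin> J} + card {m \<in> mons_deg i. mmul m x3 \<notin> J}"
proof -
  have "m \<notin> J" if "mmul m x3 \<notin> J" for m
    using assms that unfolding monomial_ideal_def by blast
  then have colon: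
      "{m \<in> mons_deg i - J. mmul m x3 \<in> J} = {m \<in> mons_deg i. mmul m x3 \<in> J \<and> m \<notin> J}"
    and rest: "{m \<in> mons_deg i - J. mmul m x3 \<notin> J} = {m \<in> mons_deg i. mmul m x3 \<notin> J}"
    by blast+
  have "card (mons_deg i - J)
          = card {m \<in> mons_deg i - J. mmul m x3 \<in> J} + card {m \<in> mons_deg i - J. mmul m x3 \<notin> J}"
    by (rule card_filter_split) (simp add: finite_mons_deg)
  then show ?thesis by (simp only: colon rest)
qed

lemma card_times_x3_standard:
  "card {m \<in> mons_deg i. mmul m x3 \<notin> J} = card {n \<in> mons_deg (Suc i) - J. snd (snd n) \<noteq> 0}"
proof (rule bij_betw_same_card)
  show "bij_betw (\<lambda>m. mmul m x3) {m \<in> mons_deg i. mmul m x3 \<notin> J}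
          {n \<in> mons_deg (Suc i) - J. snd (snd n) \<noteq> 0}"
    by (rule bij_betw_byWitness[where f' = "\<lambda>(a, b, c). (a, b, c - 1)"])
      (auto simp: mmul_def x3_def mons_deg_def mdeg_def split: prod.splits)
qed

theorem lemma4p2:
  fixes J :: "mon set" and h :: "nat \<Rightarrow> nat"
  assumes "lex_segment_ideal J"
    and "\<And>i. h i = card (mons_deg i - J)"
  shows "int (card {m \<in> mons_deg i. mmul m x3 \<in> J \<and> m \<notin> J})
           = int (h i) - int (h (i + 1)) + int (macaulay_minus (i + 1) (h (i + 1)))"
proof -
  have "monomial_ideal J" using assms(1) by (simp add: lex_segment_ideal_def)
  then have "h i = card {m \<in> mons_deg i. mmul m x3 \<in> J \<and> m \<notin> J}
                   + card {n \<in> mons_deg (Suc i) - J. snd (snd n) \<noteq> 0}"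
    using assms(2) card_standard_colon_split card_times_x3_standard by simp
  moreover have "h (i + 1) = card {n \<in> mons_deg (Suc i) - J. snd (snd n) \<noteq> 0}
                             + card {n \<in> mons_deg (Suc i) - J. snd (snd n) = 0}"
    using assms(2) finite_mons_deg
      card_filter_split[of "mons_deg (Suc i) - J" "\<lambda>n. snd (snd n) \<noteq> 0"]
    by simp
  moreover have "card {n \<in> mons_deg (Suc i) - J. snd (snd n) = 0}
                   = macaulay_minus (i + 1) (h (i + 1))"
    using lex_segment_card_x3_free_standard[OF assms(1), of "i + 1"] assms(2) by simp
  ultimately show ?thesis by simp
qed

end
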